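(* Let $\langle A;\cdot\rangle$ be a semigroup satisfying condition $( * )$. Then $\langle A;\cdot\rangle$ is an Abelian algebra if and only if $\langle A;\cdot\rangle$ is an inflation of a subsemigroup which is a rectangular band of commutative groups, and the product of any two idempotents of $A$ is an idempotent.
   Context: $A\cdot A=\{xy\mid x,y\in A\}$; an idempotent is $e$ with $ee=e$. Condition $( * )$: either ($bcA=bA$ and $Abc=Ac$ for all $b,c\in A$), or the set $A\cdot A$ is finite. A semigroup $\langle T;\cdot\rangle$ is a rectangular band of semigroups $T_{i\lambda}$ if $\{T_{i\lambda}\mid i\in I,\lambda\in\Lambda\}$ is a partition of $T$ into subsemigroups with $T_{i\lambda}\cdot T_{j\mu}\subseteq T_{i\mu}$ for all $i,j\in I$, $\lambda,\mu\in\Lambda$; it is a rectangular band of commutative groups if each $\langle T_{i\lambda};\cdot\rangle$ is a commutative group. A semigroup $\langle A;\cdot\rangle$ is an inflation of a subsemigroup $\langle B;\cdot\rangle$ if there is a partition $\{X_b\mid b\in B\}$ of $A$ with $b\in X_b$ and $x\cdot y=a\cdot b$ for all $a,b\in B$, $x\in X_a$, $y\in X_b$. A polynomial operation of an algebra is an operation obtained from a term by substituting elements of the algebra for some of its variables. An algebra is called Abelian if for every polynomial operation $t(x,y_1,\ldots,y_n)$ and all elements $u,v,c_1,\ldots,c_n,d_1,\ldots,d_n$ of the algebra, $t(u,c_1,\ldots,c_n)=t(u,d_1,\ldots,d_n)$ implies $t(v,c_1,\ldots,c_n)=t(v,d_1,\ldots,d_n)$. *)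

theory Defs
  imports Main
begin

text \<open>The semigroup A is the whole carrier type 'a :: semigroup_mult.\<close>

definition cond_star :: "'a::semigroup_mult itself \<Rightarrow> bool" where
  "cond_star _ \<longleftrightarrow>
     (\<forall>b c::'a. {b * c * x | x. True} = {b * x | x. True}
                \<and> {x * b * c | x. True} = {x * c | x. True})
     \<or> finite {x * y | x y :: 'a. True}"

text \<open>Terms of the semigroup signature with constants from the semigroup
  (i.e. polynomials). Variable 0 plays the role of x, variables 1,2,... the y_i.\<close>
datatype 'a sterm = SVar nat | SConst 'a | SMul "'a sterm" "'a sterm"

primrec seval :: "(nat \<Rightarrow> 'a::semigroup_mult) \<Rightarrow> 'a sterm \<Rightarrow> 'a" where
  "seval \<rho> (SVar n) = \<rho> n"
| "seval \<rho> (SConst a) = a"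
| "seval \<rho> (SMul s t) = seval \<rho> s * seval \<rho> t"

definition abelian_semigroup :: "'a::semigroup_mult itself \<Rightarrow> bool" where
  "abelian_semigroup _ \<longleftrightarrow>
     (\<forall>(t::'a sterm) (u::'a) v c d.
        seval (c(0 := u)) t = seval (d(0 := u)) t \<longrightarrow>
        seval (c(0 := v)) t = seval (d(0 := v)) t)"

definition subsemigroup :: "'a::semigroup_mult set \<Rightarrow> bool" where
  "subsemigroup B \<longleftrightarrow> (\<forall>x\<in>B. \<forall>y\<in>B. x * y \<in> B)"

definition comm_group_on :: "'a::semigroup_mult set \<Rightarrow> bool" where
  "comm_group_on G \<longleftrightarrow> subsemigroup G \<and> (\<forall>x\<in>G. \<forall>y\<in>G. x * y = y * x) \<and>
     (\<exists>e\<in>G. \<forall>x\<in>G. e * x = x \<and> x * e = x \<and> (\<exists>y\<in>G. x * y = e \<and> y * x = e))"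

text \<open>B is a rectangular band of commutative groups T i l (i \<in> I, l \<in> L).
  The index sets are taken inside the carrier type (no loss: blocks are
  nonempty subsets of B, so |I|,|L| \<le> |B|).\<close>
definition rect_band_comm_groups :: "'a::semigroup_mult set \<Rightarrow> bool" where
  "rect_band_comm_groups B \<longleftrightarrow>
     (\<exists>(I::'a set) (L::'a set) (T :: 'a \<Rightarrow> 'a \<Rightarrow> 'a set).
        (\<forall>i\<in>I. \<forall>l\<in>L. T i l \<noteq> {} \<and> subsemigroup (T i l) \<and> comm_group_on (T i l)) \<and>
        (\<forall>i\<in>I. \<forall>l\<in>L. \<forall>j\<in>I. \<forall>m\<in>L. T i l = T j m \<or> T i l \<inter> T j m = {}) \<and>
        (\<Union>i\<in>I. \<Union>l\<in>L. T i l) = B \<and>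
        (\<forall>i\<in>I. \<forall>l\<in>L. \<forall>j\<in>I. \<forall>m\<in>L. \<forall>x\<in>T i l. \<forall>y\<in>T j m. x * y \<in> T i m))"

definition inflation_of :: "'a::semigroup_mult set \<Rightarrow> bool" where
  "inflation_of B \<longleftrightarrow> subsemigroup B \<and>
     (\<exists>X :: 'a \<Rightarrow> 'a set.
        (\<forall>b\<in>B. b \<in> X b) \<and>
        (\<forall>x::'a. \<exists>!b. b \<in> B \<and> x \<in> X b) \<and>
        (\<forall>a\<in>B. \<forall>b\<in>B. \<forall>x\<in>X a. \<forall>y\<in>X b. x * y = a * b))"

end

theory Submission
  imports Defs
begin

text \<open>Testing the Abelian property on the polynomials \<open>x y\<^sub>1\<close> and \<open>y\<^sub>1 x y\<^sub>2\<close> gives the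
  transfer law \<open>u c = u d \<Longrightarrow> v c = v d\<close>, hence \<open>v e y = v y\<close> for every idempotent \<open>e\<close>,
  and commutativity of every maximal subgroup. Condition (*) puts every product into a subgroup
  (directly from \<open>bcA = bA\<close> and \<open>Abc = Ac\<close>, or because some power of the product repeats).
  So \<open>A\<cdot>A\<close> is the union of the maximal subgroups \<open>H\<^bsub>il\<^esub>\<close> of the idempotents \<open>i l\<close>, a rectangular
  band of commutative groups, and \<open>x \<mapsto> x e\<close> (with \<open>e\<close> the identity of the group of \<open>x^2\<close>)
  retracts \<open>A\<close> onto it as an inflation.

  Conversely, in an inflation of a rectangular band of commutative groups whose idempotents are
  closed under products, again \<open>v e y = v y\<close>. Every product \<open>P\<close> is then determined by the
  identity \<open>\<kappa> P\<close> of its group and by \<open>e P e\<close> in one fixed group \<open>H\<^sub>e\<close>. Modulo \<open>\<kappa>\<close> the semigroup is a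
  rectangular band, in which a polynomial only depends on its first and last leaf; modulo
  \<open>x \<mapsto> e x e\<close> it is a commutative group, in which
  \<open>t(u, c) t(v, d) = t(u, d) t(v, c)\<close>. Both properties transfer equations from \<open>x = u\<close> to \<open>x = v\<close>.\<close>

section \<open>Maximal subgroups\<close>

definition maximal_subgroup :: "'a::semigroup_mult \<Rightarrow> 'a set" where
  "maximal_subgroup k =
     {s. k * s = s \<and> s * k = s \<and> (\<exists>t. k * t = t \<and> t * k = t \<and> s * t = k \<and> t * s = k)}"

definition group_elements :: "'a::semigroup_mult set" where
  "group_elements = (\<Union>k. maximal_subgroup k)"

definition group_identity :: "'a::semigroup_mult \<Rightarrow> 'a" where
  "group_identity s = (THE k. s \<in> maximal_subgroup k)"

lemma maximal_subgroupD:
  assumes "s \<in> maximal_subgroup k"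
  shows "k * s = s" "s * k = s"
  using assms unfolding maximal_subgroup_def by auto

lemma maximal_subgroup_idem:
  assumes "s \<in> maximal_subgroup k"
  shows "k * k = k"
proof -
  from assms obtain t where "k * s = s" "s * t = k" unfolding maximal_subgroup_def by blast
  then show ?thesis by (metis mult.assoc)
qed

lemma idem_in_maximal_subgroup: "k * k = k \<Longrightarrow> k \<in> maximal_subgroup k"
  unfolding maximal_subgroup_def by auto

lemma maximal_subgroup_unique:
  assumes "s \<in> maximal_subgroup k" "s \<in> maximal_subgroup k'"
  shows "k = k'"
proof -
  from assms obtain t t' where h: "k * s = s" "s * k = s" "s * t = k" "t * s = k"
    "k' * s = s" "s * k' = s" "s * t' = k'" "t' * s = k'" unfolding maximal_subgroup_def by blast
  have "k * k' = k" by (metis h(4) h(6) mult.assoc)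
  moreover have "k * k' = k'" by (metis h(1) h(7) mult.assoc)
  ultimately show ?thesis by simp
qed

lemma group_identity_eq: "s \<in> maximal_subgroup k \<Longrightarrow> group_identity s = k"
  unfolding group_identity_def by (blast intro: the_equality maximal_subgroup_unique)

lemma group_identity: "s \<in> group_elements \<Longrightarrow> s \<in> maximal_subgroup (group_identity s)"
  unfolding group_elements_def using group_identity_eq by blast

lemma maximal_subgroup_closed:
  assumes x: "x \<in> maximal_subgroup k" and y: "y \<in> maximal_subgroup k"
  shows "x * y \<in> maximal_subgroup k"
proof -
  from x obtain t1 where x1: "k * x = x" "x * k = x" and t1: "k * t1 = t1" "t1 * k = t1" "x * t1 = k" "t1 * x = k"
    unfolding maximal_subgroup_def by blast
  from y obtain t2 where y1: "k * y = y" "y * k = y" and t2: "k * t2 = t2" "t2 * k = t2" "y * t2 = k" "t2 * y = k"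
    unfolding maximal_subgroup_def by blast
  have "x * y * (t2 * t1) = x * (y * t2) * t1" by (simp add: mult.assoc)
  then have "x * y * (t2 * t1) = k" using x1(2) t1(3) t2(3) by simp
  moreover have "t2 * t1 * (x * y) = t2 * (t1 * x) * y" by (simp add: mult.assoc)
  then have "t2 * t1 * (x * y) = k" using y1(1) t1(4) t2(4) by (simp add: mult.assoc)
  moreover have "k * (t2 * t1) = t2 * t1" "t2 * t1 * k = t2 * t1"
    using t1(2) t2(1) by (simp_all add: mult.assoc[symmetric]) (simp add: mult.assoc)
  moreover have "k * (x * y) = x * y" "x * y * k = x * y"
    using x1(1) y1(2) by (simp_all add: mult.assoc[symmetric]) (simp add: mult.assoc)
  ultimately show ?thesis unfolding maximal_subgroup_def by blast
qed

text \<open>The identity of the group is \<open>e = y s = s x\<close>.\<close>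
lemma group_elementI:
  fixes s :: "'a::semigroup_mult"
  assumes a1: "s = s * s * x" and a2: "s = y * s * s"
  shows "s \<in> group_elements"
proof -
  define e where "e = y * s"
  have e2: "e = s * x" unfolding e_def by (metis a1 a2 mult.assoc)
  have es: "e * s = s" unfolding e_def using a2 by (simp add: mult.assoc)
  have se: "s * e = s" unfolding e2 using a1 by (simp add: mult.assoc)
  have ee: "e * e = e" by (metis e2 es mult.assoc)
  define t where "t = e * x * e"
  have st: "s * t = e" unfolding t_def by (metis e2 ee se mult.assoc)
  have et: "e * t = t" "t * e = t" unfolding t_def by (metis ee mult.assoc)+
  have ls: "e * y * e * s = e" by (metis e_def ee es mult.assoc)
  have "t = e * y * e * s * t" using ls et by simp
  also have "\<dots> = e * y * e" using st ee by (simp add: mult.assoc)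
  finally have ts: "t * s = e" using ls by simp
  have "s \<in> maximal_subgroup e" unfolding maximal_subgroup_def using es se st et ts by blast
  then show ?thesis unfolding group_elements_def by blast
qed

lemma maximal_subgroup_mult:
  fixes x y k1 k2 :: "'a::semigroup_mult"
  assumes absorb: "\<And>e v y::'a. e * e = e \<Longrightarrow> v * (e * y) = v * y"
    and x: "x \<in> maximal_subgroup k1" and y: "y \<in> maximal_subgroup k2"
  shows "x * y \<in> maximal_subgroup (k1 * k2)"
proof -
  have i1: "k1 * k1 = k1" and i2: "k2 * k2 = k2"
    using maximal_subgroup_idem[OF x] maximal_subgroup_idem[OF y] .
  from x obtain t1 where h1: "k1 * x = x" "x * k1 = x" "x * t1 = k1" "t1 * x = k1"
    unfolding maximal_subgroup_def by blast
  from y obtain t2 where h2: "k2 * y = y" "y * k2 = y" "y * t2 = k2" "t2 * y = k2"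
    unfolding maximal_subgroup_def by blast
  define k where "k = k1 * k2"
  have kk: "k * k = k" unfolding k_def by (simp add: mult.assoc absorb[OF i1] i2)
  define t where "t = k * (t2 * (t1 * k))"
  have "k * (x * y) = x * y" unfolding k_def
    by (simp add: mult.assoc absorb[OF i2]) (simp add: mult.assoc[symmetric] h1(1))
  moreover have "(x * y) * k = x * y"
    unfolding k_def by (simp add: mult.assoc absorb[OF i1] h2(2))
  moreover have "k * t = t" "t * k = t" unfolding t_def
    by (simp add: mult.assoc[symmetric] kk) (simp add: mult.assoc kk)
  moreover have "(x * y) * t = k"
  proof -
    have "(x * y) * t = x * (y * (t2 * (t1 * k)))"
      unfolding t_def k_def by (simp add: mult.assoc absorb[OF i1] absorb[OF i2])
    also have "\<dots> = x * (k2 * (t1 * k))" using h2(3) by (metis mult.assoc)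
    also have "\<dots> = x * (t1 * k)" by (rule absorb[OF i2])
    also have "\<dots> = k" unfolding k_def using h1(3) i1 by (simp add: mult.assoc[symmetric])
    finally show ?thesis .
  qed
  moreover have "t * (x * y) = k"
  proof -
    have "t * (x * y) = k1 * (k2 * (t2 * (t1 * (x * y))))"
      unfolding t_def k_def by (simp add: mult.assoc absorb[OF i1] absorb[OF i2])
    also have "\<dots> = k1 * (k2 * (t2 * (k1 * y)))" using h1(4) by (metis mult.assoc)
    also have "\<dots> = k1 * (k2 * (t2 * y))" by (simp add: absorb[OF i1])
    also have "\<dots> = k" unfolding k_def using h2(4) i2 by simp
    finally show ?thesis .
  qed
  ultimately show ?thesis unfolding maximal_subgroup_def k_def by blast
qed

lemma comm_group_on_maximal_subgroup:
  fixes k :: "'a::semigroup_mult"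
  assumes comm: "\<And>g h. g \<in> maximal_subgroup k \<Longrightarrow> h \<in> maximal_subgroup k \<Longrightarrow> g * h = h * g"
    and k: "k * k = k"
  shows "comm_group_on (maximal_subgroup k)"
proof -
  have "\<forall>x\<in>maximal_subgroup k. k * x = x \<and> x * k = x \<and>
          (\<exists>y\<in>maximal_subgroup k. x * y = k \<and> y * x = k)"
  proof
    fix x assume x: "x \<in> maximal_subgroup k"
    then obtain t where "k * t = t" "t * k = t" "x * t = k" "t * x = k"
      unfolding maximal_subgroup_def by blast
    moreover from this have "t \<in> maximal_subgroup k"
      using maximal_subgroupD[OF x] unfolding maximal_subgroup_def by blast
    ultimately show "k * x = x \<and> x * k = x \<and> (\<exists>y\<in>maximal_subgroup k. x * y = k \<and> y * x = k)"
      using maximal_subgroupD[OF x] by blast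
  qed
  then show ?thesis unfolding comm_group_on_def subsemigroup_def
    using comm maximal_subgroup_closed idem_in_maximal_subgroup[OF k] by blast
qed

lemma comm_group_on_subset_maximal_subgroup:
  assumes "comm_group_on G"
  shows "\<exists>e\<in>G. G \<subseteq> maximal_subgroup e \<and> (\<forall>g\<in>G. g * g = g \<longrightarrow> g = e)"
proof -
  from assms obtain e where "e \<in> G"
    and e: "\<forall>x\<in>G. e * x = x \<and> x * e = x \<and> (\<exists>y\<in>G. x * y = e \<and> y * x = e)"
    unfolding comm_group_on_def by blast
  have "x \<in> maximal_subgroup e" if x: "x \<in> G" for x
  proof -
    obtain y where y: "y \<in> G" "x * y = e" "y * x = e" using e x by blast
    with bspec[OF e x] bspec[OF e y(1)] show ?thesis unfolding maximal_subgroup_def by blast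
  qed
  then have "G \<subseteq> maximal_subgroup e" by blast
  moreover have "g = e" if g: "g \<in> G" "g * g = g" for g
  proof -
    obtain y where y: "y * g = e" using e g(1) by blast
    have "g = y * g * g" using y bspec[OF e g(1)] by simp
    also have "\<dots> = y * (g * g)" by (simp add: mult.assoc)
    also have "\<dots> = e" using y g(2) by simp
    finally show ?thesis .
  qed
  ultimately show ?thesis using \<open>e \<in> G\<close> by blast
qed

lemma comm_group_on_cancel_left:
  assumes "comm_group_on G" "g \<in> G" "x \<in> G" "y \<in> G" "g * x = g * y"
  shows "x = y"
proof -
  from assms(1) obtain e where e: "\<forall>x\<in>G. e * x = x \<and> (\<exists>y\<in>G. y * x = e)"
    unfolding comm_group_on_def by blast
  then obtain h where h: "h * g = e" using assms(2) by blast
  have "x = h * g * x" using h e assms(3) by simp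
  also have "\<dots> = h * g * y" using assms(5) by (simp add: mult.assoc)
  also have "\<dots> = y" using h e assms(4) by simp
  finally show ?thesis .
qed

section \<open>Abelian semigroups satisfying condition (*)\<close>

text \<open>Without a unit there is no \<open>x ^ 0\<close>; \<open>ppow x n\<close> stands for \<open>x ^ (n + 1)\<close>.\<close>
fun ppow :: "'a::semigroup_mult \<Rightarrow> nat \<Rightarrow> 'a" where
  "ppow x 0 = x"
| "ppow x (Suc n) = x * ppow x n"

lemma ppow_add: "ppow x (Suc (m + n)) = ppow x m * ppow x n"
  by (induction m) (auto simp: mult.assoc)

lemma ppow_periodic:
  assumes "finite (range (ppow s))"
  shows "\<exists>i p. ppow s i = ppow s (i + Suc p)"
proof -
  have "\<not> inj (ppow s)" using assms finite_imageD infinite_UNIV_nat by blast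
  then obtain i j where "i \<noteq> j" "ppow s i = ppow s j" unfolding inj_def by blast
  then obtain i j where "i < j" "ppow s i = ppow s j" by (metis linorder_neqE_nat)
  then show ?thesis using less_imp_Suc_add by fastforce
qed

lemma abelian_left_transfer:
  fixes u c d v :: "'a::semigroup_mult"
  assumes ab: "abelian_semigroup TYPE('a)" and h: "u * c = u * d"
  shows "v * c = v * d"
proof -
  let ?t = "SMul (SVar 0) (SVar 1) :: 'a sterm"
  have "seval ((\<lambda>_. c)(0:=u)) ?t = seval ((\<lambda>_. d)(0:=u)) ?t" using h by simp
  then have "seval ((\<lambda>_. c)(0:=v)) ?t = seval ((\<lambda>_. d)(0:=v)) ?t"
    using ab unfolding abelian_semigroup_def by blast
  then show ?thesis by simp
qed

lemma abelian_absorb: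
  fixes e v y :: "'a::semigroup_mult"
  assumes ab: "abelian_semigroup TYPE('a)" and ee: "e * e = e"
  shows "v * (e * y) = v * y"
  by (rule abelian_left_transfer[OF ab, of e]) (simp add: mult.assoc[symmetric] ee)

lemma abelian_maximal_subgroup_comm:
  fixes g h k :: "'a::semigroup_mult"
  assumes ab: "abelian_semigroup TYPE('a)"
    and g: "g \<in> maximal_subgroup k" and h: "h \<in> maximal_subgroup k"
  shows "g * h = h * g"
proof -
  let ?t = "SMul (SMul (SVar 1) (SVar 0)) (SVar 2) :: 'a sterm"
  let ?c = "\<lambda>n::nat. if n = 1 then g else k"
  let ?d = "\<lambda>n::nat. if n = 1 then k else g"
  note units = maximal_subgroupD[OF g] maximal_subgroupD[OF h]
  have "seval (?c(0:=k)) ?t = seval (?d(0:=k)) ?t" using units by (simp add: mult.assoc)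
  then have "seval (?c(0:=h)) ?t = seval (?d(0:=h)) ?t"
    using ab unfolding abelian_semigroup_def by blast
  then show ?thesis using units by (simp add: mult.assoc)
qed

lemma mult_in_group_elements_if_ideals_eq:
  fixes a b :: "'a::semigroup_mult"
  assumes "\<forall>b c::'a. {b * c * x | x. True} = {b * x | x. True} \<and> {x * b * c | x. True} = {x * c | x. True}"
  shows "a * b \<in> group_elements"
proof -
  let ?s = "a * b"
  have "?s \<in> {a * b * x | x. True}" using assms[rule_format, of a b] by blast
  then obtain x1 where "?s = ?s * x1" by blast
  moreover have "?s * x1 \<in> {?s * ?s * x | x. True}" using assms by blast
  ultimately obtain x where x: "?s = ?s * ?s * x" by auto
  have "?s \<in> {x * a * b | x. True}" using assms[rule_format, of a b] by blast
  then obtain y1 where "?s = y1 * ?s" by (auto simp: mult.assoc)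
  moreover have "y1 * ?s \<in> {x * ?s * ?s | x. True}" using assms by blast
  ultimately obtain y where y: "?s = y * ?s * ?s" by auto
  show ?thesis using group_elementI[OF x y] .
qed

text \<open>Transferring \<open>s^i s = s^i s^(p+2)\<close> to every left factor, and then \<open>a^2 b = a^2 b s^(p+1)\<close>
  to the left factor \<open>a\<close>, gives \<open>s = s^(p+2)\<close> for \<open>s = a b\<close>.\<close>
lemma abelian_periodic_product_group_element:
  fixes a b s :: "'a::semigroup_mult"
  assumes ab: "abelian_semigroup TYPE('a)" and s: "s = a * b"
    and period: "ppow s i = ppow s (i + Suc p)"
  shows "s \<in> group_elements"
proof -
  have "ppow s i * ppow s (Suc p) = ppow s i * ppow s 0"
  proof -
    have "ppow s i * ppow s (Suc p) = s * ppow s (i + Suc p)" using ppow_add[of s i "Suc p"] by simp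
    also have "\<dots> = s * ppow s i" using period by simp
    finally show ?thesis using ppow_add[of s i 0] by simp
  qed
  then have "a * ppow s 0 = a * ppow s (Suc p)" by (rule abelian_left_transfer[OF ab, symmetric])
  then have "(a * a) * b = (a * a) * (b * ppow s p)" using s by (simp add: mult.assoc)
  then have "a * b = a * (b * ppow s p)" by (rule abelian_left_transfer[OF ab])
  then have sp: "s * ppow s p = s" using s by (simp add: mult.assoc)
  have "ppow s (Suc (Suc p + p)) = s * ppow s p * ppow s p" using ppow_add[of s "Suc p" p] by simp
  then have s2: "s = ppow s (Suc (Suc (p + p)))" using sp by simp
  have "s = s * s * ppow s (p + p)"
    using s2 ppow_add[of s 1 "p + p"] by simp
  moreover have "s = ppow s (p + p) * s * s"
    using s2 ppow_add[of s "p + p" 1] by (simp add: mult.assoc)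
  ultimately show ?thesis by (rule group_elementI)
qed

lemma abelian_cond_star_products:
  fixes a b :: "'a::semigroup_mult"
  assumes ab: "abelian_semigroup TYPE('a)" and cs: "cond_star TYPE('a)"
  shows "a * b \<in> group_elements"
proof (cases "finite {x * y | x y :: 'a. True}")
  case True
  have "ppow (a * b) n \<in> {x * y | x y :: 'a. True}" for n by (cases n) auto
  then have "range (ppow (a * b)) \<subseteq> {x * y | x y :: 'a. True}" by blast
  then have "finite (range (ppow (a * b)))" using True finite_subset by blast
  then obtain i p where "ppow (a * b) i = ppow (a * b) (i + Suc p)" using ppow_periodic by blast
  then show ?thesis by (rule abelian_periodic_product_group_element[OF ab refl])
next
  case False
  then show ?thesis
    using cs mult_in_group_elements_if_ideals_eq unfolding cond_star_def by blast
qed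

lemma maximal_subgroups_disjoint:
  "k \<noteq> k' \<Longrightarrow> maximal_subgroup k \<inter> maximal_subgroup k' = {}"
  using maximal_subgroup_unique by blast

lemma rect_band_comm_groups_group_elements:
  assumes absorb: "\<And>e v y::'a::semigroup_mult. e * e = e \<Longrightarrow> v * (e * y) = v * y"
    and comm: "\<And>k g h::'a. g \<in> maximal_subgroup k \<Longrightarrow> h \<in> maximal_subgroup k \<Longrightarrow> g * h = h * g"
  shows "rect_band_comm_groups (group_elements :: 'a set)"
proof -
  let ?E = "{k::'a. k * k = k}" and ?T = "\<lambda>i l::'a. maximal_subgroup (i * l)"
  have idem: "(i * l) * (i * l) = i * l" if "i \<in> ?E" "l \<in> ?E" for i l
    using that by (simp add: mult.assoc absorb)
  have blocks: "\<forall>i\<in>?E. \<forall>l\<in>?E. ?T i l \<noteq> {} \<and> subsemigroup (?T i l) \<and> comm_group_on (?T i l)"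
  proof (intro ballI)
    fix i l assume "i \<in> ?E" "l \<in> ?E"
    then have "(i * l) * (i * l) = i * l" by (rule idem)
    moreover from this have "comm_group_on (?T i l)"
      by (rule comm_group_on_maximal_subgroup[rotated]) (use comm in blast)
    ultimately show "?T i l \<noteq> {} \<and> subsemigroup (?T i l) \<and> comm_group_on (?T i l)"
      using idem_in_maximal_subgroup unfolding comm_group_on_def by blast
  qed
  have disjoint: "\<forall>i\<in>?E. \<forall>l\<in>?E. \<forall>j\<in>?E. \<forall>m\<in>?E. ?T i l = ?T j m \<or> ?T i l \<inter> ?T j m = {}"
    using maximal_subgroups_disjoint by metis
  have cover: "(\<Union>i\<in>?E. \<Union>l\<in>?E. ?T i l) = group_elements"
  proof
    show "(\<Union>i\<in>?E. \<Union>l\<in>?E. ?T i l) \<subseteq> group_elements" unfolding group_elements_def by blast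
    show "group_elements \<subseteq> (\<Union>i\<in>?E. \<Union>l\<in>?E. ?T i l)"
      unfolding group_elements_def using maximal_subgroup_idem by fastforce
  qed
  have product: "\<forall>i\<in>?E. \<forall>l\<in>?E. \<forall>j\<in>?E. \<forall>m\<in>?E. \<forall>x\<in>?T i l. \<forall>y\<in>?T j m. x * y \<in> ?T i m"
  proof (intro ballI)
    fix i l j m x y assume "i \<in> ?E" "l \<in> ?E" "j \<in> ?E" "m \<in> ?E" "x \<in> ?T i l" "y \<in> ?T j m"
    moreover from this have "(i * l) * (j * m) = i * m" by (simp add: mult.assoc absorb)
    ultimately show "x * y \<in> ?T i m" using maximal_subgroup_mult[OF absorb] by metis
  qed
  show ?thesis unfolding rect_band_comm_groups_def
    by (intro exI[of _ ?E] exI[of _ ?T] conjI) (fact blocks disjoint cover product)+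
qed

text \<open>The retraction is \<open>x \<mapsto> x e\<close>, with \<open>e\<close> the identity of the group containing \<open>x^2\<close>.\<close>
lemma inflation_of_group_elements:
  assumes ab: "abelian_semigroup TYPE('a::semigroup_mult)"
    and products: "\<And>x y::'a. x * y \<in> group_elements"
  shows "inflation_of (group_elements :: 'a set)"
proof -
  define r where "r x = x * group_identity (x * x)" for x :: 'a
  have r_fix: "r b = b" if b: "b \<in> group_elements" for b
  proof -
    obtain k where b: "b \<in> maximal_subgroup k" using b unfolding group_elements_def by blast
    then have "group_identity (b * b) = k" by (simp add: maximal_subgroup_closed group_identity_eq)
    then show ?thesis unfolding r_def using maximal_subgroupD[OF b] by simp
  qed
  have r_mult: "x * y = r x * r y" for x y
  proof -
    note sq = group_identity[OF products, of y y]
    have "y * (y * group_identity (y * y)) = y * y"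
      using maximal_subgroupD[OF sq] by (simp add: mult.assoc[symmetric])
    then have "x * (y * group_identity (y * y)) = x * y" by (rule abelian_left_transfer[OF ab])
    moreover have "r x * r y = x * (y * group_identity (y * y))"
      unfolding r_def using abelian_absorb[OF ab maximal_subgroup_idem[OF group_identity[OF products]]]
      by (simp add: mult.assoc)
    ultimately show ?thesis by simp
  qed
  show ?thesis unfolding inflation_of_def
  proof (intro conjI exI[of _ "\<lambda>b. {x. r x = b}"] ballI allI)
    show "subsemigroup (group_elements :: 'a set)" unfolding subsemigroup_def using products by blast
    show "b \<in> {x. r x = b}" if "b \<in> group_elements" for b using r_fix[OF that] by simp
    show "\<exists>!b. b \<in> group_elements \<and> x \<in> {x. r x = b}" for x
      unfolding r_def using products by auto
    show "x * y = a * b" if "x \<in> {x. r x = a}" "y \<in> {x. r x = b}" for a b x y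
      using that r_mult[of x y] by simp
  qed
qed

section \<open>A sufficient condition for the Abelian property\<close>

fun first_leaf :: "'a sterm \<Rightarrow> 'a sterm" where
  "first_leaf (SMul s t) = first_leaf s"
| "first_leaf t = t"

fun last_leaf :: "'a sterm \<Rightarrow> 'a sterm" where
  "last_leaf (SMul s t) = last_leaf t"
| "last_leaf t = t"

lemma seval_first_leaf_upd:
  "first_leaf t \<noteq> SVar 0 \<Longrightarrow> seval (c(0:=u)) (first_leaf t) = seval c (first_leaf t)"
  by (induction t) auto

lemma seval_last_leaf_upd:
  "last_leaf t \<noteq> SVar 0 \<Longrightarrow> seval (c(0:=u)) (last_leaf t) = seval c (last_leaf t)"
  by (induction t) auto

lemma band_hom_seval:
  fixes \<kappa> :: "'a::semigroup_mult \<Rightarrow> 'a"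
  assumes mult: "\<And>a b. \<kappa> (a * b) = \<kappa> a * \<kappa> b" and idem: "\<And>a. \<kappa> a * \<kappa> a = \<kappa> a"
    and band: "\<And>a b c. \<kappa> a * (\<kappa> b * \<kappa> c) = \<kappa> a * \<kappa> c"
  shows "\<kappa> (seval \<rho> t) = \<kappa> (seval \<rho> (first_leaf t)) * \<kappa> (seval \<rho> (last_leaf t))"
  by (induction t) (simp_all add: mult mult.assoc band idem)

text \<open>A rectangular band only sees the outermost leaves of a term, and each of them either is
  the variable \<open>x\<close> or does not depend on it.\<close>
lemma band_hom_seval_transfer:
  fixes \<kappa> :: "'a::semigroup_mult \<Rightarrow> 'a"
  assumes mult: "\<And>a b. \<kappa> (a * b) = \<kappa> a * \<kappa> b" and idem: "\<And>a. \<kappa> a * \<kappa> a = \<kappa> a"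
    and band: "\<And>a b c. \<kappa> a * (\<kappa> b * \<kappa> c) = \<kappa> a * \<kappa> c"
    and h: "\<kappa> (seval (c(0:=u)) t) = \<kappa> (seval (d(0:=u)) t)"
  shows "\<kappa> (seval (c(0:=v)) t) = \<kappa> (seval (d(0:=v)) t)"
proof -
  define F where "F e w = \<kappa> (seval (e(0:=w)) (first_leaf t))" for e w
  define L where "L e w = \<kappa> (seval (e(0:=w)) (last_leaf t))" for e w
  have leaves: "\<kappa> (seval (e(0:=w)) t) = F e w * L e w" for e w
    unfolding F_def L_def by (rule band_hom_seval[OF mult idem band])
  have hu: "F c u * L c u = F d u * L d u" using h by (simp add: leaves)
  have "F c v * L c v = F d v * L d v"
  proof (cases "first_leaf t = SVar 0")
    case F0: True
    then have F: "F e w = \<kappa> w" for e w by (simp add: F_def)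
    show ?thesis
    proof (cases "last_leaf t = SVar 0")
      case True
      then show ?thesis by (simp add: F L_def)
    next
      case False
      then have L: "L e w = \<kappa> (seval e (last_leaf t))" for e w
        by (simp add: L_def seval_last_leaf_upd)
      have "F c v * L c v = \<kappa> v * (\<kappa> u * L c u)" by (simp add: F L band)
      also have "\<dots> = \<kappa> v * (\<kappa> u * L d u)" using hu by (simp add: F)
      also have "\<dots> = F d v * L d v" by (simp add: F L band)
      finally show ?thesis .
    qed
  next
    case False
    then have F: "F e w = \<kappa> (seval e (first_leaf t))" for e w
      by (simp add: F_def seval_first_leaf_upd)
    show ?thesis
    proof (cases "last_leaf t = SVar 0")
      case True
      then have L: "L e w = \<kappa> w" for e w by (simp add: L_def)
      have "F c v * L c v = F c u * \<kappa> u * \<kappa> v" by (simp add: F L band mult.assoc)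
      also have "\<dots> = F d u * \<kappa> u * \<kappa> v" using hu by (simp add: L)
      also have "\<dots> = F d v * L d v" by (simp add: F L band mult.assoc)
      finally show ?thesis .
    next
      case False
      then have L: "L e w = \<kappa> (seval e (last_leaf t))" for e w
        by (simp add: L_def seval_last_leaf_upd)
      show ?thesis using hu by (simp add: F L)
    qed
  qed
  then show ?thesis by (simp add: leaves)
qed

lemma comm_hom_seval_exchange:
  fixes \<phi> :: "'a::semigroup_mult \<Rightarrow> 'a"
  assumes mult: "\<And>a b. \<phi> (a * b) = \<phi> a * \<phi> b" and \<phi>_G: "\<And>a. \<phi> a \<in> G"
    and comm: "\<And>x y. x \<in> G \<Longrightarrow> y \<in> G \<Longrightarrow> x * y = y * x"
  shows "\<phi> (seval (c(0:=u)) t) * \<phi> (seval (d(0:=v)) t) = \<phi> (seval (d(0:=u)) t) * \<phi> (seval (c(0:=v)) t)"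
proof (induction t)
  case (SVar n)
  then show ?case using comm \<phi>_G by (cases "n = 0") auto
next
  case (SConst a)
  then show ?case by simp
next
  case (SMul t1 t2)
  let ?a1 = "\<phi> (seval (c(0:=u)) t1)" and ?a2 = "\<phi> (seval (c(0:=u)) t2)"
  let ?b1 = "\<phi> (seval (d(0:=v)) t1)" and ?b2 = "\<phi> (seval (d(0:=v)) t2)"
  let ?c1 = "\<phi> (seval (d(0:=u)) t1)" and ?c2 = "\<phi> (seval (d(0:=u)) t2)"
  let ?d1 = "\<phi> (seval (c(0:=v)) t1)" and ?d2 = "\<phi> (seval (c(0:=v)) t2)"
  have "\<phi> (seval (c(0:=u)) (SMul t1 t2)) * \<phi> (seval (d(0:=v)) (SMul t1 t2)) = ?a1 * (?a2 * ?b1) * ?b2"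
    by (simp add: mult mult.assoc)
  also have "\<dots> = ?a1 * (?b1 * ?a2) * ?b2" by (simp only: comm[OF \<phi>_G \<phi>_G, of "seval (c(0:=u)) t2"])
  also have "\<dots> = (?a1 * ?b1) * (?a2 * ?b2)" by (simp add: mult.assoc)
  also have "\<dots> = (?c1 * ?d1) * (?c2 * ?d2)" by (simp only: SMul.IH)
  also have "\<dots> = ?c1 * (?d1 * ?c2) * ?d2" by (simp add: mult.assoc)
  also have "\<dots> = ?c1 * (?c2 * ?d1) * ?d2" by (simp only: comm[OF \<phi>_G \<phi>_G, of "seval (c(0:=v)) t1"])
  also have "\<dots> = \<phi> (seval (d(0:=u)) (SMul t1 t2)) * \<phi> (seval (c(0:=v)) (SMul t1 t2))"
    by (simp add: mult mult.assoc)
  finally show ?case .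
qed

lemma comm_hom_seval_transfer:
  fixes \<phi> :: "'a::semigroup_mult \<Rightarrow> 'a"
  assumes mult: "\<And>a b. \<phi> (a * b) = \<phi> a * \<phi> b" and G: "comm_group_on G" and \<phi>_G: "\<And>a. \<phi> a \<in> G"
    and h: "\<phi> (seval (c(0:=u)) t) = \<phi> (seval (d(0:=u)) t)"
  shows "\<phi> (seval (c(0:=v)) t) = \<phi> (seval (d(0:=v)) t)"
proof -
  have comm: "\<And>x y. x \<in> G \<Longrightarrow> y \<in> G \<Longrightarrow> x * y = y * x" using G unfolding comm_group_on_def by blast
  have "\<phi> (seval (d(0:=u)) t) * \<phi> (seval (d(0:=v)) t) = \<phi> (seval (d(0:=u)) t) * \<phi> (seval (c(0:=v)) t)"
    using comm_hom_seval_exchange[OF mult \<phi>_G comm, where c=c and u=u and d=d and v=v and t=t] h by simp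
  from comm_group_on_cancel_left[OF G \<phi>_G \<phi>_G \<phi>_G this] show ?thesis by simp
qed

lemma abelian_semigroupI:
  fixes \<kappa> \<phi> :: "'a::semigroup_mult \<Rightarrow> 'a"
  assumes \<kappa>_mult: "\<And>a b. \<kappa> (a * b) = \<kappa> a * \<kappa> b" and \<kappa>_idem: "\<And>a. \<kappa> a * \<kappa> a = \<kappa> a"
    and \<kappa>_band: "\<And>a b c. \<kappa> a * (\<kappa> b * \<kappa> c) = \<kappa> a * \<kappa> c"
    and \<phi>_mult: "\<And>a b. \<phi> (a * b) = \<phi> a * \<phi> b" and G: "comm_group_on G" and \<phi>_G: "\<And>a. \<phi> a \<in> G"
    and separate: "\<And>a b c d. \<kappa> (a * b) = \<kappa> (c * d) \<Longrightarrow> \<phi> (a * b) = \<phi> (c * d) \<Longrightarrow> a * b = c * d"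
  shows "abelian_semigroup TYPE('a)"
  unfolding abelian_semigroup_def
proof (intro allI impI)
  fix t :: "'a sterm" and u v :: 'a and c d :: "nat \<Rightarrow> 'a"
  assume h: "seval (c(0 := u)) t = seval (d(0 := u)) t"
  show "seval (c(0 := v)) t = seval (d(0 := v)) t"
  proof (cases t)
    case (SMul t1 t2)
    have "\<kappa> (seval (c(0:=v)) t) = \<kappa> (seval (d(0:=v)) t)"
      using h by (rule band_hom_seval_transfer[OF \<kappa>_mult \<kappa>_idem \<kappa>_band, OF arg_cong[where f=\<kappa>]])
    moreover have "\<phi> (seval (c(0:=v)) t) = \<phi> (seval (d(0:=v)) t)"
      using h by (rule comm_hom_seval_transfer[OF \<phi>_mult G \<phi>_G, OF arg_cong[where f=\<phi>]])
    ultimately show ?thesis unfolding SMul seval.simps by (rule separate)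
  qed (use h in auto)
qed

text \<open>\<open>\<kappa>\<close> sends \<open>x\<close> to the identity of the group containing its image under the retraction,
  \<open>\<phi>\<close> is conjugation into one fixed group, and every product \<open>P\<close> is recovered as \<open>\<kappa> P (\<phi> P) \<kappa> P\<close>.\<close>
lemma abelian_if_retraction_to_group_elements:
  fixes r :: "'a::semigroup_mult \<Rightarrow> 'a"
  assumes absorb: "\<And>e v y::'a. e * e = e \<Longrightarrow> v * (e * y) = v * y"
    and comm: "\<And>k g h::'a. g \<in> maximal_subgroup k \<Longrightarrow> h \<in> maximal_subgroup k \<Longrightarrow> g * h = h * g"
    and r_in: "\<And>x. r x \<in> group_elements"
    and r_mult: "\<And>x y. x * y = r x * r y"
    and r_fix: "\<And>x y. r (x * y) = x * y"
  shows "abelian_semigroup TYPE('a)"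
proof -
  define \<kappa> where "\<kappa> a = group_identity (r a)" for a
  have \<kappa>_in: "r a \<in> maximal_subgroup (\<kappa> a)" for a unfolding \<kappa>_def using r_in by (rule group_identity)
  have \<kappa>_idem: "\<kappa> a * \<kappa> a = \<kappa> a" for a using \<kappa>_in by (rule maximal_subgroup_idem)
  have \<kappa>_mult: "\<kappa> (a * b) = \<kappa> a * \<kappa> b" for a b
  proof -
    have "r (a * b) \<in> maximal_subgroup (\<kappa> a * \<kappa> b)"
      using maximal_subgroup_mult[OF absorb \<kappa>_in \<kappa>_in, of a b] by (simp only: r_fix r_mult[symmetric])
    then show ?thesis unfolding \<kappa>_def[of "a * b"] by (rule group_identity_eq)
  qed
  have \<kappa>_band: "\<kappa> a * (\<kappa> b * \<kappa> c) = \<kappa> a * \<kappa> c" for a b c using absorb[OF \<kappa>_idem] .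
  obtain e :: 'a where e: "e * e = e" using \<kappa>_idem by blast
  define \<phi> where "\<phi> a = e * a * e" for a
  have \<phi>_mult: "\<phi> (a * b) = \<phi> a * \<phi> b" for a b
    unfolding \<phi>_def using absorb[OF e] e by (simp add: mult.assoc)
  have \<phi>_in: "\<phi> a \<in> maximal_subgroup e" for a
  proof -
    note e_in = idem_in_maximal_subgroup[OF e]
    have "e * r a * e \<in> maximal_subgroup (e * \<kappa> a * e)"
      by (intro maximal_subgroup_mult[OF absorb] e_in \<kappa>_in)
    moreover have "e * \<kappa> a * e = e" using absorb[OF \<kappa>_idem] e by (simp add: mult.assoc)
    moreover have "e * a = e * r a" using r_mult[of e a] r_fix[of e e] e by simp
    ultimately show ?thesis by (simp add: \<phi>_def)
  qed
  have recover: "P = \<kappa> P * \<phi> P * \<kappa> P" if "r P = P" for P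
  proof -
    have "\<kappa> P * \<phi> P * \<kappa> P = \<kappa> P * (e * (P * (e * \<kappa> P)))" by (simp add: \<phi>_def mult.assoc)
    also have "\<dots> = \<kappa> P * P * \<kappa> P" by (simp add: absorb[OF e] mult.assoc)
    finally show ?thesis using maximal_subgroupD[OF \<kappa>_in[of P]] that by simp
  qed
  show ?thesis
  proof (rule abelian_semigroupI[OF \<kappa>_mult \<kappa>_idem \<kappa>_band \<phi>_mult _ \<phi>_in])
    show "comm_group_on (maximal_subgroup e)"
      using e by (rule comm_group_on_maximal_subgroup[rotated]) (use comm in blast)
    show "a * b = c * d" if "\<kappa> (a * b) = \<kappa> (c * d)" "\<phi> (a * b) = \<phi> (c * d)" for a b c d
      using recover[OF r_fix[of a b]] recover[OF r_fix[of c d]] that by simp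
  qed
qed

section \<open>Inflations of rectangular bands of commutative groups\<close>

lemma rect_band_comm_groupsE:
  assumes "rect_band_comm_groups B"
  obtains I L :: "'a::semigroup_mult set" and T :: "'a \<Rightarrow> 'a \<Rightarrow> 'a set" where
    "\<And>b. b \<in> B \<Longrightarrow> \<exists>i\<in>I. \<exists>l\<in>L. b \<in> T i l"
    "\<And>i l. i \<in> I \<Longrightarrow> l \<in> L \<Longrightarrow> comm_group_on (T i l)"
    "\<And>i l j m x y. i \<in> I \<Longrightarrow> l \<in> L \<Longrightarrow> j \<in> I \<Longrightarrow> m \<in> L \<Longrightarrow> x \<in> T i l \<Longrightarrow> y \<in> T j m
      \<Longrightarrow> x * y \<in> T i m"
proof -
  from assms obtain I L and T :: "'a \<Rightarrow> 'a \<Rightarrow> 'a set"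
    where blocks: "\<forall>i\<in>I. \<forall>l\<in>L. T i l \<noteq> {} \<and> subsemigroup (T i l) \<and> comm_group_on (T i l)"
      and cover: "(\<Union>i\<in>I. \<Union>l\<in>L. T i l) = B"
      and mult: "\<forall>i\<in>I. \<forall>l\<in>L. \<forall>j\<in>I. \<forall>m\<in>L. \<forall>x\<in>T i l. \<forall>y\<in>T j m. x * y \<in> T i m"
    unfolding rect_band_comm_groups_def by blast
  show thesis
  proof (rule that)
    show "\<exists>i\<in>I. \<exists>l\<in>L. b \<in> T i l" if b: "b \<in> B" for b using cover b by blast
  qed (use blocks mult in blast)+
qed

lemma rect_band_comm_groups_subset_group_elements:
  fixes B :: "'a::semigroup_mult set"
  assumes "rect_band_comm_groups B"
  shows "B \<subseteq> group_elements"
proof (rule rect_band_comm_groupsE[OF assms])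
  fix I L :: "'a set" and T
  assume cover: "\<And>b. b \<in> B \<Longrightarrow> \<exists>i\<in>I. \<exists>l\<in>L. b \<in> T i l"
    and cg: "\<And>i l. i \<in> I \<Longrightarrow> l \<in> L \<Longrightarrow> comm_group_on (T i l)"
  have "T i l \<subseteq> group_elements" if il: "i \<in> I" "l \<in> L" for i l
  proof -
    obtain e where "T i l \<subseteq> maximal_subgroup e"
      using comm_group_on_subset_maximal_subgroup[OF cg[OF il]] by blast
    then show ?thesis unfolding group_elements_def by blast
  qed
  then show "B \<subseteq> group_elements" using cover by blast
qed

lemma rect_band_comm_groups_maximal_subgroup_comm:
  fixes B :: "'a::semigroup_mult set" and g h k :: 'a
  assumes rb: "rect_band_comm_groups B" and products: "\<And>x y. x * y \<in> B"
    and g: "g \<in> maximal_subgroup k" and h: "h \<in> maximal_subgroup k"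
  shows "g * h = h * g"
proof (rule rect_band_comm_groupsE[OF rb])
  fix I L :: "'a set" and T
  assume cover: "\<And>b. b \<in> B \<Longrightarrow> \<exists>i\<in>I. \<exists>l\<in>L. b \<in> T i l"
    and cg: "\<And>i l. i \<in> I \<Longrightarrow> l \<in> L \<Longrightarrow> comm_group_on (T i l)"
    and mult: "\<And>i l j m x y. i \<in> I \<Longrightarrow> l \<in> L \<Longrightarrow> j \<in> I \<Longrightarrow> m \<in> L \<Longrightarrow> x \<in> T i l \<Longrightarrow> y \<in> T j m
      \<Longrightarrow> x * y \<in> T i m"
  have "k \<in> B" using products[of k k] maximal_subgroup_idem[OF g] by simp
  then obtain i l where il: "i \<in> I" "l \<in> L" "k \<in> T i l" using cover by blast
  have block: "x \<in> T i l" if x: "x \<in> maximal_subgroup k" for x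
  proof -
    have xk: "x = k * x * k" using maximal_subgroupD[OF x] by simp
    then have "x \<in> B" using products[of "k * x" k] by simp
    then obtain j m where "j \<in> I" "m \<in> L" "x \<in> T j m" using cover by blast
    then have "k * x * k \<in> T i l" using mult il by blast
    then show ?thesis using xk by simp
  qed
  show "g * h = h * g" using cg[OF il(1,2)] block[OF g] block[OF h] unfolding comm_group_on_def by blast
qed

text \<open>Within \<open>b\<^sub>1 f b\<^sub>2\<close> the idempotent \<open>f\<close> can be replaced by the identities of the blocks
  of \<open>b\<^sub>1\<close> and \<open>b\<^sub>2\<close>: the idempotents \<open>e\<^sub>1 f e\<^sub>2\<close> and \<open>e\<^sub>1 e\<^sub>2\<close> lie in the same block, whose
  only idempotent is its identity.\<close>
lemma rect_band_comm_groups_absorb: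
  fixes B :: "'a::semigroup_mult set"
  assumes rb: "rect_band_comm_groups B" and products: "\<And>x y. x * y \<in> B"
    and idem_closed: "\<And>e f::'a. e * e = e \<Longrightarrow> f * f = f \<Longrightarrow> (e * f) * (e * f) = e * f"
    and b1: "b1 \<in> B" and b2: "b2 \<in> B" and f: "f * f = f"
  shows "b1 * (f * b2) = b1 * b2"
proof (rule rect_band_comm_groupsE[OF rb])
  fix I L :: "'a set" and T
  assume cover: "\<And>b. b \<in> B \<Longrightarrow> \<exists>i\<in>I. \<exists>l\<in>L. b \<in> T i l"
    and cg: "\<And>i l. i \<in> I \<Longrightarrow> l \<in> L \<Longrightarrow> comm_group_on (T i l)"
    and mult: "\<And>i l j m x y. i \<in> I \<Longrightarrow> l \<in> L \<Longrightarrow> j \<in> I \<Longrightarrow> m \<in> L \<Longrightarrow> x \<in> T i l \<Longrightarrow> y \<in> T j m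
      \<Longrightarrow> x * y \<in> T i m"
  have "f \<in> B" using products[of f f] f by simp
  then obtain j m where jm: "j \<in> I" "m \<in> L" "f \<in> T j m" using cover by blast
  obtain i l where il: "i \<in> I" "l \<in> L" "b1 \<in> T i l" using cover b1 by blast
  obtain p q where pq: "p \<in> I" "q \<in> L" "b2 \<in> T p q" using cover b2 by blast
  obtain e1 where e1: "e1 \<in> T i l" "b1 \<in> maximal_subgroup e1"
    using comm_group_on_subset_maximal_subgroup[OF cg[OF il(1,2)]] il(3) by blast
  obtain e2 where e2: "e2 \<in> T p q" "b2 \<in> maximal_subgroup e2"
    using comm_group_on_subset_maximal_subgroup[OF cg[OF pq(1,2)]] pq(3) by blast
  obtain e3 where e3: "\<forall>g\<in>T i q. g * g = g \<longrightarrow> g = e3"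
    using comm_group_on_subset_maximal_subgroup[OF cg[OF il(1) pq(2)]] by blast
  have idem: "e1 * e1 = e1" "e2 * e2 = e2"
    using maximal_subgroup_idem[OF e1(2)] maximal_subgroup_idem[OF e2(2)] .
  have "e1 * f * e2 \<in> T i q" using mult[OF il(1) jm(2) pq(1,2) mult[OF il(1,2) jm(1,2) e1(1) jm(3)] e2(1)] .
  moreover have "(e1 * f * e2) * (e1 * f * e2) = e1 * f * e2" using idem f by (intro idem_closed)
  ultimately have efe: "e1 * f * e2 = e3" using e3 by blast
  have "e1 * e2 \<in> T i q" using mult[OF il(1,2) pq(1,2) e1(1) e2(1)] .
  moreover have "(e1 * e2) * (e1 * e2) = e1 * e2" using idem by (rule idem_closed)
  ultimately have e1e2: "e1 * e2 = e3" using e3 by blast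
  have "b1 * (f * b2) = b1 * e1 * (f * (e2 * b2))" using maximal_subgroupD[OF e1(2)] maximal_subgroupD[OF e2(2)] by simp
  also have "\<dots> = b1 * (e1 * f * e2) * b2" by (simp add: mult.assoc)
  also have "\<dots> = b1 * e1 * (e2 * b2)" by (simp add: efe flip: e1e2) (simp add: mult.assoc)
  also have "\<dots> = b1 * b2" using maximal_subgroupD[OF e1(2)] maximal_subgroupD[OF e2(2)] by simp
  finally show "b1 * (f * b2) = b1 * b2" .
qed

lemma inflation_of_retraction:
  fixes B :: "'a::semigroup_mult set"
  assumes "inflation_of B"
  shows "\<exists>r. (\<forall>x. r x \<in> B) \<and> (\<forall>b\<in>B. r b = b) \<and> (\<forall>x y. x * y = r x * r y)"
proof -
  from assms obtain X where X_self: "\<forall>b\<in>B. b \<in> X b"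
    and X_unique: "\<forall>x::'a. \<exists>!b. b \<in> B \<and> x \<in> X b"
    and X_mult: "\<forall>a\<in>B. \<forall>b\<in>B. \<forall>x\<in>X a. \<forall>y\<in>X b. x * y = a * b"
    unfolding inflation_of_def by blast
  define r where "r x = (THE b. b \<in> B \<and> x \<in> X b)" for x
  have r: "r x \<in> B \<and> x \<in> X (r x)" for x
    unfolding r_def by (rule theI') (use X_unique in blast)
  have "r b = b" if "b \<in> B" for b
    unfolding r_def using X_self X_unique that by (intro the1_equality) auto
  moreover have "x * y = r x * r y" for x y using X_mult r by blast
  ultimately show ?thesis using r by blast
qed

lemma inflation_rect_band_imp_abelian:
  fixes B :: "'a::semigroup_mult set"
  assumes infl: "inflation_of B" and rb: "rect_band_comm_groups B"
    and idem_closed: "\<And>e f::'a. e * e = e \<Longrightarrow> f * f = f \<Longrightarrow> (e * f) * (e * f) = e * f"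
  shows "abelian_semigroup TYPE('a)"
proof -
  obtain r where r_in: "\<And>x. r x \<in> B" and r_fix: "\<And>b. b \<in> B \<Longrightarrow> r b = b"
    and r_mult: "\<And>x y. x * y = r x * r y"
    using inflation_of_retraction[OF infl] by blast
  have products: "x * y \<in> B" for x y
    using infl r_in[of x] r_in[of y] r_mult[of x y] unfolding inflation_of_def subsemigroup_def by simp
  have absorb: "v * (e * y) = v * y" if e: "e * e = e" for e v y :: 'a
  proof -
    have "e * y = e * r y" using r_mult[of e y] r_fix[OF products[of e e]] e by simp
    then have "v * (e * y) = r v * (e * r y)" using r_mult[of v "e * y"] r_fix[OF products[of e y]] by simp
    also have "\<dots> = r v * r y" by (rule rect_band_comm_groups_absorb[OF rb products idem_closed r_in r_in e])
    finally show ?thesis using r_mult[of v y] by simp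
  qed
  show ?thesis
  proof (rule abelian_if_retraction_to_group_elements[where r = r, OF absorb])
    show "g * h = h * g" if "g \<in> maximal_subgroup k" "h \<in> maximal_subgroup k" for k g h :: 'a
      using rect_band_comm_groups_maximal_subgroup_comm[OF rb products that] .
    show "r x \<in> group_elements" for x using rect_band_comm_groups_subset_group_elements[OF rb] r_in by blast
    show "x * y = r x * r y" for x y by (rule r_mult)
    show "r (x * y) = x * y" for x y using r_fix products by blast
  qed
qed

theorem mainTheorem15:
  assumes "cond_star TYPE('a::semigroup_mult)"
  shows "abelian_semigroup TYPE('a) \<longleftrightarrow>
    ((\<exists>B::'a set. inflation_of B \<and> rect_band_comm_groups B) \<and>
     (\<forall>e f::'a. e * e = e \<and> f * f = f \<longrightarrow> (e * f) * (e * f) = e * f))"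
proof
  assume ab: "abelian_semigroup TYPE('a)"
  have products: "x * y \<in> group_elements" for x y :: 'a
    using ab assms by (rule abelian_cond_star_products)
  have "inflation_of (group_elements :: 'a set)"
    using ab products by (rule inflation_of_group_elements)
  moreover have "rect_band_comm_groups (group_elements :: 'a set)"
    using abelian_absorb[OF ab] abelian_maximal_subgroup_comm[OF ab]
    by (rule rect_band_comm_groups_group_elements)
  moreover have "(e * f) * (e * f) = e * f" if "e * e = e" "f * f = f" for e f :: 'a
    using that abelian_absorb[OF ab] by (simp add: mult.assoc)
  ultimately show "(\<exists>B::'a set. inflation_of B \<and> rect_band_comm_groups B) \<and>
     (\<forall>e f::'a. e * e = e \<and> f * f = f \<longrightarrow> (e * f) * (e * f) = e * f)" by blast
next
  assume "(\<exists>B::'a set. inflation_of B \<and> rect_band_comm_groups B) \<and>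
     (\<forall>e f::'a. e * e = e \<and> f * f = f \<longrightarrow> (e * f) * (e * f) = e * f)"
  then obtain B :: "'a set" where "inflation_of B" "rect_band_comm_groups B"
    and "\<And>e f::'a. e * e = e \<Longrightarrow> f * f = f \<Longrightarrow> (e * f) * (e * f) = e * f" by blast
  then show "abelian_semigroup TYPE('a)" by (rule inflation_rect_band_imp_abelian)
qed

end
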